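(* Let $R$ be a ring and $A=\bigoplus_{1\le j\le n}A_j$ an $R$-module in which each $A_j$ is a simple $R$-submodule and $A_1\cong_R A_2\cong_R\cdots\cong_R A_n$. Then for $r\in\mathbb{N}$, $\mathrm{sr}_R(A)=r$ if and only if $n=r$.
   Context: A generating subset of an $R$-submodule is minimal if no proper subset of it generates that submodule. An $R$-module $M$ has special rank $\mathrm{sr}_R(M)=r$ if every finitely generated $R$-submodule of $M$ can be generated by $r$ elements and some finitely generated $R$-submodule of $M$ has a minimal generating subset of exactly $r$ elements. *)

theory Defs
  imports "HOL-Algebra.Module"
begin

definition gen_submod :: "('a, 'c) ring_scheme \<Rightarrow> ('a, 'b, 'd) module_scheme \<Rightarrow> 'b set \<Rightarrow> 'b set" where
  "gen_submod R M S = \<Inter>{N. submodule N R M \<and> S \<subseteq> N}"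

definition generates :: "('a, 'c) ring_scheme \<Rightarrow> ('a, 'b, 'd) module_scheme \<Rightarrow> 'b set \<Rightarrow> 'b set \<Rightarrow> bool" where
  "generates R M S N \<longleftrightarrow> S \<subseteq> carrier M \<and> gen_submod R M S = N"

definition fg_submod :: "('a, 'c) ring_scheme \<Rightarrow> ('a, 'b, 'd) module_scheme \<Rightarrow> 'b set \<Rightarrow> bool" where
  "fg_submod R M N \<longleftrightarrow> submodule N R M \<and> (\<exists>S. finite S \<and> generates R M S N)"

definition minimal_gen_set :: "('a, 'c) ring_scheme \<Rightarrow> ('a, 'b, 'd) module_scheme \<Rightarrow> 'b set \<Rightarrow> 'b set \<Rightarrow> bool" where
  "minimal_gen_set R M S N \<longleftrightarrow> generates R M S N \<and> (\<forall>T. T \<subset> S \<longrightarrow> \<not> generates R M T N)"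

definition special_rank :: "('a, 'c) ring_scheme \<Rightarrow> ('a, 'b, 'd) module_scheme \<Rightarrow> nat \<Rightarrow> bool" where
  "special_rank R M r \<longleftrightarrow>
     (\<forall>N. fg_submod R M N \<longrightarrow> (\<exists>S. finite S \<and> card S \<le> r \<and> generates R M S N)) \<and>
     (\<exists>N S. fg_submod R M N \<and> minimal_gen_set R M S N \<and> finite S \<and> card S = r)"

definition simple_submod :: "('a, 'c) ring_scheme \<Rightarrow> ('a, 'b, 'd) module_scheme \<Rightarrow> 'b set \<Rightarrow> bool" where
  "simple_submod R M N \<longleftrightarrow> submodule N R M \<and> N \<noteq> {\<zero>\<^bsub>M\<^esub>} \<and>
     (\<forall>K. submodule K R M \<and> K \<subseteq> N \<longrightarrow> K = {\<zero>\<^bsub>M\<^esub>} \<or> K = N)"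

definition submod_iso :: "('a, 'c) ring_scheme \<Rightarrow> ('a, 'b, 'd) module_scheme \<Rightarrow> 'b set \<Rightarrow> 'b set \<Rightarrow> bool" where
  "submod_iso R M N K \<longleftrightarrow> (\<exists>f. bij_betw f N K \<and>
     (\<forall>x\<in>N. \<forall>y\<in>N. f (x \<oplus>\<^bsub>M\<^esub> y) = f x \<oplus>\<^bsub>M\<^esub> f y) \<and>
     (\<forall>a\<in>carrier R. \<forall>x\<in>N. f (a \<odot>\<^bsub>M\<^esub> x) = a \<odot>\<^bsub>M\<^esub> f x))"

definition internal_direct_sum :: "('a, 'c) ring_scheme \<Rightarrow> ('a, 'b, 'd) module_scheme \<Rightarrow> (nat \<Rightarrow> 'b set) \<Rightarrow> nat \<Rightarrow> bool" where
  "internal_direct_sum R M A n \<longleftrightarrow>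
     (\<forall>j<n. submodule (A j) R M) \<and>
     carrier M = {finsum M f {..<n} | f. \<forall>j<n. f j \<in> A j} \<and>
     (\<forall>f g. (\<forall>j<n. f j \<in> A j) \<and> (\<forall>j<n. g j \<in> A j) \<and> finsum M f {..<n} = finsum M g {..<n}
        \<longrightarrow> (\<forall>j<n. f j = g j))"

end

theory Submission
  imports Defs
begin

text \<open>Since \<open>R\<close> is commutative and the summands are isomorphic, a scalar killing one nonzero
  \<open>e \<in> A\<^sub>1\<close> kills all of \<open>A\<close>; as \<open>A\<^sub>1\<close> is simple, \<open>Ann(e)\<close> is maximal and \<open>A\<close> behaves like a
  vector space over \<open>R / Ann(A)\<close>. Hence the Steinitz exchange lemma holds for generated
  submodules: an irredundant subset of the span of a finite set \<open>G\<close> has at most \<open>|G|\<close> elements.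
  Nonzero \<open>e\<^sub>j \<in> A\<^sub>j\<close> form an irredundant generating set of size \<open>n\<close>, so every minimal generating
  set of a submodule has at most \<open>n\<close> elements, every finitely generated submodule has a minimal
  generating subset, and \<open>{e\<^sub>1, \<dots>, e\<^sub>n}\<close> is itself minimal: \<open>sr(A) = n\<close>.\<close>

context module begin

section \<open>Generated submodules and the exchange lemma\<close>

lemma submodule_zero_closed: "submodule N R M \<Longrightarrow> \<zero>\<^bsub>M\<^esub> \<in> N"
  using subgroup.one_closed[OF submodule.axioms(1)] by simp

lemma submoduleI_smult:
  assumes "H \<subseteq> carrier M" and "\<zero>\<^bsub>M\<^esub> \<in> H"
    and add: "\<And>x y. x \<in> H \<Longrightarrow> y \<in> H \<Longrightarrow> x \<oplus>\<^bsub>M\<^esub> y \<in> H"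
    and smult: "\<And>a x. a \<in> carrier R \<Longrightarrow> x \<in> H \<Longrightarrow> a \<odot>\<^bsub>M\<^esub> x \<in> H"
  shows "submodule H R M"
proof (rule submoduleI[OF assms(1,2) _ add smult])
  fix x assume "x \<in> H"
  moreover have "\<ominus>\<^bsub>M\<^esub> x = (\<ominus> \<one>) \<odot>\<^bsub>M\<^esub> x" using \<open>x \<in> H\<close> assms(1) by (auto simp: smult_l_minus)
  ultimately show "\<ominus>\<^bsub>M\<^esub> x \<in> H" using smult by simp
qed

lemma submodule_Int: "submodule N R M \<Longrightarrow> submodule K R M \<Longrightarrow> submodule (N \<inter> K) R M"
  by (rule submoduleI_smult) (auto dest: submoduleE submodule_zero_closed)

lemma submodule_finsum_closed:
  assumes N: "submodule N R M" and "finite I" and "\<forall>i\<in>I. f i \<in> N"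
  shows "finsum M f I \<in> N"
  using assms(2,3)
proof (induction I rule: finite_induct)
  case empty
  then show ?case using submodule_zero_closed[OF N] by simp
next
  case (insert i I)
  then have "finsum M f (insert i I) = f i \<oplus>\<^bsub>M\<^esub> finsum M f I"
    using submoduleE(1)[OF N] by (intro finsum_insert) auto
  with insert show ?case using submoduleE(5)[OF N] by auto
qed

lemma gen_submod_subset: "S \<subseteq> gen_submod R M S"
  unfolding gen_submod_def by auto

lemma gen_submod_least: "submodule N R M \<Longrightarrow> S \<subseteq> N \<Longrightarrow> gen_submod R M S \<subseteq> N"
  unfolding gen_submod_def by auto

lemma gen_submod_carrier: "S \<subseteq> carrier M \<Longrightarrow> gen_submod R M S \<subseteq> carrier M"
  using gen_submod_least carrier_is_submodule by blast

lemma gen_submod_submodule: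
  assumes "S \<subseteq> carrier M"
  shows "submodule (gen_submod R M S) R M"
  by (rule submoduleI_smult)
    (auto simp: gen_submod_def gen_submod_carrier[OF assms, unfolded gen_submod_def]
      dest: submodule_zero_closed submoduleE(4,5))

lemma gen_submod_mono: "S \<subseteq> T \<Longrightarrow> T \<subseteq> carrier M \<Longrightarrow> gen_submod R M S \<subseteq> gen_submod R M T"
  by (meson gen_submod_least gen_submod_subset gen_submod_submodule order_trans)

lemma gen_submod_insert_subset:
  assumes X: "X \<subseteq> carrier M" and y: "y \<in> carrier M"
  shows "gen_submod R M (insert y X)
           \<subseteq> {u \<oplus>\<^bsub>M\<^esub> a \<odot>\<^bsub>M\<^esub> y | u a. u \<in> gen_submod R M X \<and> a \<in> carrier R}"
    (is "_ \<subseteq> ?N")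
proof (rule gen_submod_least)
  have GX: "gen_submod R M X \<subseteq> carrier M" using gen_submod_carrier X .
  have sX: "submodule (gen_submod R M X) R M" using gen_submod_submodule X .
  show "submodule ?N R M"
  proof (rule submoduleI_smult)
    show "?N \<subseteq> carrier M" using GX y by auto
    show "\<zero>\<^bsub>M\<^esub> \<in> ?N"
      using submodule_zero_closed[OF sX] y by (auto intro!: exI[of _ "\<zero>\<^bsub>M\<^esub>"] exI[of _ "\<zero>"])
  next
    fix p q assume "p \<in> ?N" "q \<in> ?N"
    then obtain u a v b where u: "u \<in> gen_submod R M X" and a: "a \<in> carrier R"
      and v: "v \<in> gen_submod R M X" and b: "b \<in> carrier R"
      and pq: "p = u \<oplus>\<^bsub>M\<^esub> a \<odot>\<^bsub>M\<^esub> y" "q = v \<oplus>\<^bsub>M\<^esub> b \<odot>\<^bsub>M\<^esub> y" by blast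
    have "u \<in> carrier M" "v \<in> carrier M" using u v GX by auto
    then have "p \<oplus>\<^bsub>M\<^esub> q = (u \<oplus>\<^bsub>M\<^esub> v) \<oplus>\<^bsub>M\<^esub> (a \<oplus> b) \<odot>\<^bsub>M\<^esub> y"
      using pq a b y by (simp add: smult_l_distr M.a_ac)
    moreover have "u \<oplus>\<^bsub>M\<^esub> v \<in> gen_submod R M X" using submoduleE(5)[OF sX] u v .
    ultimately show "p \<oplus>\<^bsub>M\<^esub> q \<in> ?N" using a b by blast
  next
    fix c p assume c: "c \<in> carrier R" and "p \<in> ?N"
    then obtain u a where u: "u \<in> gen_submod R M X" and a: "a \<in> carrier R"
      and p: "p = u \<oplus>\<^bsub>M\<^esub> a \<odot>\<^bsub>M\<^esub> y" by blast
    have "c \<odot>\<^bsub>M\<^esub> p = c \<odot>\<^bsub>M\<^esub> u \<oplus>\<^bsub>M\<^esub> (c \<otimes> a) \<odot>\<^bsub>M\<^esub> y"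
      using p u GX a c y by (auto simp: smult_r_distr smult_assoc1)
    moreover have "c \<odot>\<^bsub>M\<^esub> u \<in> gen_submod R M X" using submoduleE(4)[OF sX] c u .
    ultimately show "c \<odot>\<^bsub>M\<^esub> p \<in> ?N" using a c by blast
  qed
  have "y = \<zero>\<^bsub>M\<^esub> \<oplus>\<^bsub>M\<^esub> \<one> \<odot>\<^bsub>M\<^esub> y" using y by simp
  moreover have "x = x \<oplus>\<^bsub>M\<^esub> \<zero> \<odot>\<^bsub>M\<^esub> y" if "x \<in> X" for x using that X y by auto
  ultimately show "insert y X \<subseteq> ?N"
    using submodule_zero_closed[OF sX] gen_submod_subset[of X] by blast
qed

text \<open>Equivalently, every cyclic submodule \<open>R z\<close> with \<open>z \<noteq> 0\<close> is simple. This vector-space-like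
  property is what the Steinitz exchange argument needs.\<close>

definition invertible_scalars :: bool where
  "invertible_scalars \<longleftrightarrow> (\<forall>z\<in>carrier M. \<forall>a\<in>carrier R.
     a \<odot>\<^bsub>M\<^esub> z \<noteq> \<zero>\<^bsub>M\<^esub> \<longrightarrow> (\<exists>c\<in>carrier R. c \<odot>\<^bsub>M\<^esub> (a \<odot>\<^bsub>M\<^esub> z) = z))"

lemma gen_submod_exchange:
  assumes invertible_scalars and X: "X \<subseteq> carrier M" and x: "x \<in> carrier M" and y: "y \<in> carrier M"
    and x_in: "x \<in> gen_submod R M (insert y X)" and x_out: "x \<notin> gen_submod R M X"
  shows "y \<in> gen_submod R M (insert x X)"
proof -
  obtain u a where u: "u \<in> gen_submod R M X" and a: "a \<in> carrier R"
    and x_eq: "x = u \<oplus>\<^bsub>M\<^esub> a \<odot>\<^bsub>M\<^esub> y"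
    using gen_submod_insert_subset[OF X y] x_in by blast
  have uc: "u \<in> carrier M" using u gen_submod_carrier X by blast
  have "a \<odot>\<^bsub>M\<^esub> y \<noteq> \<zero>\<^bsub>M\<^esub>" using x_eq x_out u uc by auto
  then obtain c where c: "c \<in> carrier R" and cay: "c \<odot>\<^bsub>M\<^esub> (a \<odot>\<^bsub>M\<^esub> y) = y"
    using \<open>invertible_scalars\<close> y a unfolding invertible_scalars_def by blast
  have "c \<odot>\<^bsub>M\<^esub> x = c \<odot>\<^bsub>M\<^esub> u \<oplus>\<^bsub>M\<^esub> y"
    using x_eq cay c uc a y by (simp add: smult_r_distr)
  then have y_eq: "y = \<ominus>\<^bsub>M\<^esub> (c \<odot>\<^bsub>M\<^esub> u) \<oplus>\<^bsub>M\<^esub> c \<odot>\<^bsub>M\<^esub> x"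
    using c uc y by (simp add: M.a_assoc[symmetric] M.l_neg)
  have X': "insert x X \<subseteq> carrier M" using X x by auto
  note sX' = gen_submod_submodule[OF X']
  have "u \<in> gen_submod R M (insert x X)" using u gen_submod_mono[OF _ X', of X] by auto
  moreover have "x \<in> gen_submod R M (insert x X)" using gen_submod_subset by blast
  ultimately show ?thesis
    using y_eq c submoduleE(3,4,5)[OF sX'] by metis
qed

definition irredundant :: "'c set \<Rightarrow> bool" where
  "irredundant T \<longleftrightarrow> (\<forall>t\<in>T. t \<notin> gen_submod R M (T - {t}))"

lemma irredundant_subset_of_generating_subset:
  assumes "irredundant T" and "G \<subseteq> T" and "T \<subseteq> carrier M" and "T \<subseteq> gen_submod R M G"
  shows "T \<subseteq> G"
proof
  fix t assume t: "t \<in> T"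
  show "t \<in> G"
  proof (rule ccontr)
    assume "t \<notin> G"
    then have "gen_submod R M G \<subseteq> gen_submod R M (T - {t})"
      using assms(2,3) by (intro gen_submod_mono) auto
    then show False using t assms(1,4) unfolding irredundant_def by blast
  qed
qed

lemma gen_submod_exchange_subset:
  assumes invertible_scalars and G: "G \<subseteq> carrier M" and "g \<in> G"
    and t: "t \<in> gen_submod R M G" "t \<notin> gen_submod R M (G - {g})"
  shows "gen_submod R M G \<subseteq> gen_submod R M (insert t (G - {g}))"
proof -
  have G_g: "G - {g} \<subseteq> carrier M" and G_g_t: "insert t (G - {g}) \<subseteq> carrier M"
    using G t(1) gen_submod_carrier[OF G] by auto
  have "insert g (G - {g}) = G" using \<open>g \<in> G\<close> by blast
  then have "g \<in> gen_submod R M (insert t (G - {g}))"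
    using gen_submod_exchange[OF assms(1) G_g] t G G_g_t \<open>g \<in> G\<close> by auto
  then have "G \<subseteq> gen_submod R M (insert t (G - {g}))"
    using gen_submod_subset[of "insert t (G - {g})"] by blast
  then show ?thesis using gen_submod_least[OF gen_submod_submodule[OF G_g_t]] by blast
qed

lemma irredundant_card_le:
  assumes invertible_scalars and "finite G" and "G \<subseteq> carrier M" and "T \<subseteq> gen_submod R M G"
    and T_irr: "irredundant T"
  shows "finite T \<and> card T \<le> card G"
  using assms(2-4)
proof (induction "card (G - T)" arbitrary: G rule: less_induct)
  case less
  note G = less.prems(1,2) and T_gen = less.prems(3)
  have T_carrier: "T \<subseteq> carrier M" using T_gen gen_submod_carrier[OF G(2)] by blast
  show ?case
  proof (cases "G \<subseteq> T")
    case True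
    then have "T = G"
      using irredundant_subset_of_generating_subset[OF T_irr True T_carrier T_gen] by blast
    then show ?thesis using G by simp
  next
    case False
    then obtain g where g: "g \<in> G" "g \<notin> T" by blast
    have G_g_carrier: "G - {g} \<subseteq> carrier M" using G by blast
    have card_less: "card ((G - T) - {g}) < card (G - T)"
      using g G by (intro card_Diff1_less) auto
    show ?thesis
    proof (cases "T \<subseteq> gen_submod R M (G - {g})")
      case True
      have "G - {g} - T = (G - T) - {g}" by blast
      then have "finite T \<and> card T \<le> card (G - {g})"
        using less.hyps[of "G - {g}"] card_less G G_g_carrier True by simp
      then show ?thesis using card_Diff1_le[of G g] by linarith
    next
      case False
      then obtain t where t: "t \<in> T" "t \<notin> gen_submod R M (G - {g})" by blast
      define G' where "G' = insert t (G - {g})"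
      have G'_carrier: "G' \<subseteq> carrier M" using G_g_carrier t T_carrier unfolding G'_def by blast
      have "T \<subseteq> gen_submod R M G'"
        using gen_submod_exchange_subset[OF assms(1) G(2) g(1)] t T_gen unfolding G'_def by blast
      moreover have "G' - T = (G - T) - {g}" using t unfolding G'_def by blast
      moreover have "finite G'" using G unfolding G'_def by simp
      ultimately have "finite T \<and> card T \<le> card G'"
        using less.hyps[of G'] card_less G'_carrier by simp
      moreover have "card G' \<le> card G"
        using g G card_insert_le_m1[of "card G" "G - {g}" t] unfolding G'_def
        by (auto simp: card_gt_0_iff)
      ultimately show ?thesis by linarith
    qed
  qed
qed

section \<open>Minimal generating sets and special rank\<close>

lemma minimal_gen_set_irredundant:
  assumes "minimal_gen_set R M S N"
  shows "irredundant S"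
  unfolding irredundant_def
proof (intro ballI notI)
  fix t assume t: "t \<in> S" and t_in: "t \<in> gen_submod R M (S - {t})"
  have S_carrier: "S \<subseteq> carrier M" and S_gen: "gen_submod R M S = N"
    using assms unfolding minimal_gen_set_def generates_def by auto
  have "S \<subseteq> gen_submod R M (S - {t})" using t_in gen_submod_subset[of "S - {t}"] by auto
  moreover have "S - {t} \<subseteq> carrier M" using S_carrier by blast
  ultimately have "gen_submod R M S \<subseteq> gen_submod R M (S - {t})"
    using gen_submod_least gen_submod_submodule by blast
  moreover have "gen_submod R M (S - {t}) \<subseteq> gen_submod R M S"
    using gen_submod_mono[OF _ S_carrier] by blast
  ultimately have "generates R M (S - {t}) N" using S_gen S_carrier unfolding generates_def by auto
  moreover have "S - {t} \<subset> S" using t by auto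
  ultimately show False using assms unfolding minimal_gen_set_def by blast
qed

lemma irredundant_minimal_gen_set:
  assumes "irredundant S" and S_gen: "generates R M S N"
  shows "minimal_gen_set R M S N"
  unfolding minimal_gen_set_def
proof (intro conjI allI impI notI)
  fix T assume "T \<subset> S" and T_gen: "generates R M T N"
  then obtain s where s: "s \<in> S" "T \<subseteq> S - {s}" by blast
  have S_carrier: "S \<subseteq> carrier M" using S_gen unfolding generates_def by blast
  then have "gen_submod R M T \<subseteq> gen_submod R M (S - {s})"
    using s(2) gen_submod_mono[of T "S - {s}"] by blast
  moreover have "s \<in> gen_submod R M T"
    using S_gen T_gen s(1) gen_submod_subset[of S] unfolding generates_def by blast
  ultimately show False using assms(1) s(1) unfolding irredundant_def by blast
qed (rule S_gen)

lemma fg_submod_minimal_gen_set: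
  assumes "fg_submod R M N"
  obtains S where "finite S" and "minimal_gen_set R M S N"
proof -
  obtain G where "finite G" and "generates R M G N"
    using assms unfolding fg_submod_def by blast
  then obtain S where S: "S \<subseteq> G \<and> generates R M S N"
    and S_least: "\<And>T. T \<subseteq> G \<and> generates R M T N \<Longrightarrow> card S \<le> card T"
    using ex_has_least_nat[of "\<lambda>S. S \<subseteq> G \<and> generates R M S N" G card] by blast
  have "finite S" using S \<open>finite G\<close> finite_subset by blast
  moreover have "minimal_gen_set R M S N"
    unfolding minimal_gen_set_def
  proof (intro conjI allI impI notI)
    fix T assume "T \<subset> S" and "generates R M T N"
    then have "card S \<le> card T" using S S_least[of T] by blast
    moreover have "card T < card S" using psubset_card_mono[OF \<open>finite S\<close> \<open>T \<subset> S\<close>] .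
    ultimately show False by simp
  qed (use S in blast)
  ultimately show ?thesis using that by blast
qed

lemma special_rank_iff_card_irredundant_generating:
  assumes invertible_scalars and "finite E" and E_gen: "generates R M E (carrier M)"
    and "irredundant E"
  shows "special_rank R M r \<longleftrightarrow> card E = r"
proof -
  have E_carrier: "E \<subseteq> carrier M" using E_gen unfolding generates_def by blast
  have minimal_le: "card S \<le> card E" if "minimal_gen_set R M S N" for S N
  proof -
    have "S \<subseteq> carrier M" using that unfolding minimal_gen_set_def generates_def by auto
    then show ?thesis
      using irredundant_card_le[OF assms(1,2) E_carrier] E_gen minimal_gen_set_irredundant[OF that]
      unfolding generates_def by auto
  qed
  have generating_ge: "card E \<le> card S" if "finite S" and "generates R M S (carrier M)" for S
    using irredundant_card_le[OF assms(1) that(1), of E] that(2) \<open>irredundant E\<close> E_carrier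
    unfolding generates_def by auto
  have M_fg: "fg_submod R M (carrier M)"
    unfolding fg_submod_def using carrier_is_submodule \<open>finite E\<close> E_gen by blast
  have "minimal_gen_set R M E (carrier M)"
    using irredundant_minimal_gen_set[OF \<open>irredundant E\<close> E_gen] .
  then have rank_card_E: "special_rank R M (card E)"
    unfolding special_rank_def
  proof (intro conjI allI impI)
    fix N assume "fg_submod R M N"
    then obtain S where "finite S" "minimal_gen_set R M S N"
      using fg_submod_minimal_gen_set by blast
    then show "\<exists>S. finite S \<and> card S \<le> card E \<and> generates R M S N"
      using minimal_le unfolding minimal_gen_set_def by blast
  qed (use M_fg \<open>finite E\<close> in blast)
  show ?thesis
  proof
    assume rank: "special_rank R M r"
    then obtain S where "finite S" "card S \<le> r" "generates R M S (carrier M)"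
      using M_fg unfolding special_rank_def by blast
    then have "card E \<le> r" using generating_ge by fastforce
    moreover obtain N S where "minimal_gen_set R M S N" and "card S = r"
      using rank unfolding special_rank_def by blast
    then have "r \<le> card E" using minimal_le by blast
    ultimately show "card E = r" by simp
  qed (use rank_card_E in blast)
qed

section \<open>Simple submodules and annihilators\<close>

lemma cyclic_submodule:
  assumes v: "v \<in> carrier M"
  shows "submodule {c \<odot>\<^bsub>M\<^esub> v | c. c \<in> carrier R} R M" (is "submodule ?C R M")
proof (rule submoduleI_smult)
  show "?C \<subseteq> carrier M" using v by auto
  have "\<zero>\<^bsub>M\<^esub> = \<zero> \<odot>\<^bsub>M\<^esub> v" using v by simp
  then show "\<zero>\<^bsub>M\<^esub> \<in> ?C" by blast
next
  fix x y assume "x \<in> ?C" "y \<in> ?C"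
  then obtain c d where "c \<in> carrier R" "d \<in> carrier R" "x = c \<odot>\<^bsub>M\<^esub> v" "y = d \<odot>\<^bsub>M\<^esub> v" by blast
  then have "x \<oplus>\<^bsub>M\<^esub> y = (c \<oplus> d) \<odot>\<^bsub>M\<^esub> v" "c \<oplus> d \<in> carrier R"
    using v by (simp_all add: smult_l_distr)
  then show "x \<oplus>\<^bsub>M\<^esub> y \<in> ?C" by blast
next
  fix a x assume a: "a \<in> carrier R" and "x \<in> ?C"
  then obtain c where "c \<in> carrier R" "x = c \<odot>\<^bsub>M\<^esub> v" by blast
  then have "a \<odot>\<^bsub>M\<^esub> x = (a \<otimes> c) \<odot>\<^bsub>M\<^esub> v" "a \<otimes> c \<in> carrier R"
    using a v by (simp_all add: smult_assoc1)
  then show "a \<odot>\<^bsub>M\<^esub> x \<in> ?C" by blast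
qed

lemma simple_submod_ex_nonzero:
  assumes "simple_submod R M N"
  obtains v where "v \<in> N" and "v \<noteq> \<zero>\<^bsub>M\<^esub>"
  using assms submodule_zero_closed that unfolding simple_submod_def by blast

lemma simple_submod_cyclic:
  assumes simple: "simple_submod R M N" and "v \<in> N" "v \<noteq> \<zero>\<^bsub>M\<^esub>"
  shows "N = {c \<odot>\<^bsub>M\<^esub> v | c. c \<in> carrier R}"
proof -
  have N: "submodule N R M" using simple unfolding simple_submod_def by blast
  have v: "v \<in> carrier M" using submoduleE(1)[OF N] assms(2) by blast
  have "{c \<odot>\<^bsub>M\<^esub> v | c. c \<in> carrier R} \<subseteq> N" using submoduleE(4)[OF N] assms(2) by blast
  moreover have "v \<in> {c \<odot>\<^bsub>M\<^esub> v | c. c \<in> carrier R}" using v by (intro CollectI exI[of _ \<one>]) simp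
  ultimately show ?thesis
    using simple cyclic_submodule[OF v] assms(3) unfolding simple_submod_def by blast
qed

text \<open>Commutativity of \<open>R\<close> (part of HOL-Algebra's \<open>module\<close> locale) is essential here.\<close>

lemma simple_submod_annihilator:
  assumes "simple_submod R M N" and "v \<in> N" "v \<noteq> \<zero>\<^bsub>M\<^esub>"
    and a: "a \<in> carrier R" and av: "a \<odot>\<^bsub>M\<^esub> v = \<zero>\<^bsub>M\<^esub>" and "x \<in> N"
  shows "a \<odot>\<^bsub>M\<^esub> x = \<zero>\<^bsub>M\<^esub>"
proof -
  obtain b where b: "b \<in> carrier R" and x: "x = b \<odot>\<^bsub>M\<^esub> v"
    using simple_submod_cyclic[OF assms(1-3)] \<open>x \<in> N\<close> by blast
  have v_carrier: "v \<in> carrier M"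
    using assms(1,2) submoduleE(1) unfolding simple_submod_def by blast
  have "a \<odot>\<^bsub>M\<^esub> x = (a \<otimes> b) \<odot>\<^bsub>M\<^esub> v" using x a b v_carrier by (simp add: smult_assoc1)
  also have "\<dots> = (b \<otimes> a) \<odot>\<^bsub>M\<^esub> v" using a b by (simp add: R.m_comm)
  also have "\<dots> = b \<odot>\<^bsub>M\<^esub> (a \<odot>\<^bsub>M\<^esub> v)" using a b v_carrier by (simp add: smult_assoc1)
  finally show ?thesis using av b by simp
qed

lemma submod_iso_annihilator:
  assumes "submod_iso R M N K" and "submodule N R M" and "submodule K R M"
    and a: "a \<in> carrier R" and kills_N: "\<forall>x\<in>N. a \<odot>\<^bsub>M\<^esub> x = \<zero>\<^bsub>M\<^esub>" and "y \<in> K"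
  shows "a \<odot>\<^bsub>M\<^esub> y = \<zero>\<^bsub>M\<^esub>"
proof -
  obtain f where f: "bij_betw f N K"
    and f_add: "\<forall>x\<in>N. \<forall>x'\<in>N. f (x \<oplus>\<^bsub>M\<^esub> x') = f x \<oplus>\<^bsub>M\<^esub> f x'"
    and f_smult: "\<forall>c\<in>carrier R. \<forall>x\<in>N. f (c \<odot>\<^bsub>M\<^esub> x) = c \<odot>\<^bsub>M\<^esub> f x"
    using assms(1) unfolding submod_iso_def by blast
  have zero_N: "\<zero>\<^bsub>M\<^esub> \<in> N" using submodule_zero_closed assms(2) .
  have f_zero_carrier: "f \<zero>\<^bsub>M\<^esub> \<in> carrier M"
    using f zero_N submoduleE(1)[OF assms(3)] unfolding bij_betw_def by blast
  have "f \<zero>\<^bsub>M\<^esub> = f \<zero>\<^bsub>M\<^esub> \<oplus>\<^bsub>M\<^esub> f \<zero>\<^bsub>M\<^esub>" using f_add zero_N by (metis M.l_zero M.zero_closed)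
  then have f_zero: "f \<zero>\<^bsub>M\<^esub> = \<zero>\<^bsub>M\<^esub>" using M.add.l_cancel_one'[OF f_zero_carrier f_zero_carrier] by simp
  obtain x where "x \<in> N" and "y = f x" using f \<open>y \<in> K\<close> unfolding bij_betw_def by blast
  then show ?thesis using f_smult a kills_N f_zero by metis
qed

text \<open>If killing one nonzero \<open>v\<close> of a simple submodule forces killing all of \<open>M\<close>, then the
  annihilator of \<open>M\<close> is the maximal ideal \<open>Ann(v)\<close>, so scalars act invertibly.\<close>

lemma invertible_scalarsI:
  assumes simple: "simple_submod R M N" and v: "v \<in> N" "v \<noteq> \<zero>\<^bsub>M\<^esub>"
    and kills_M: "\<And>a z. a \<in> carrier R \<Longrightarrow> a \<odot>\<^bsub>M\<^esub> v = \<zero>\<^bsub>M\<^esub> \<Longrightarrow> z \<in> carrier M \<Longrightarrow> a \<odot>\<^bsub>M\<^esub> z = \<zero>\<^bsub>M\<^esub>"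
  shows invertible_scalars
  unfolding invertible_scalars_def
proof (intro ballI impI)
  fix z a assume z: "z \<in> carrier M" and a: "a \<in> carrier R" and az: "a \<odot>\<^bsub>M\<^esub> z \<noteq> \<zero>\<^bsub>M\<^esub>"
  have N: "submodule N R M" using simple unfolding simple_submod_def by blast
  have v_carrier: "v \<in> carrier M" using submoduleE(1)[OF N] v by blast
  have "a \<odot>\<^bsub>M\<^esub> v \<noteq> \<zero>\<^bsub>M\<^esub>" using kills_M[OF a _ z] az by blast
  moreover have "a \<odot>\<^bsub>M\<^esub> v \<in> N" using submoduleE(4)[OF N a v(1)] .
  ultimately obtain c where c: "c \<in> carrier R" and cav: "v = c \<odot>\<^bsub>M\<^esub> (a \<odot>\<^bsub>M\<^esub> v)"
    using simple_submod_cyclic[OF simple] v(1) by blast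
  define d where "d = c \<otimes> a \<ominus> \<one>"
  have d: "d \<in> carrier R" using c a unfolding d_def by simp
  have d_smult: "d \<odot>\<^bsub>M\<^esub> x = c \<odot>\<^bsub>M\<^esub> (a \<odot>\<^bsub>M\<^esub> x) \<ominus>\<^bsub>M\<^esub> x" if "x \<in> carrier M" for x
    using c a that unfolding d_def a_minus_def M.minus_eq
    by (simp add: smult_l_distr smult_assoc1 smult_l_minus)
  have "d \<odot>\<^bsub>M\<^esub> v = \<zero>\<^bsub>M\<^esub>" using d_smult[OF v_carrier] cav v_carrier by (simp add: a_minus_def M.r_neg)
  then have "c \<odot>\<^bsub>M\<^esub> (a \<odot>\<^bsub>M\<^esub> z) \<ominus>\<^bsub>M\<^esub> z = \<zero>\<^bsub>M\<^esub>" using kills_M[OF d _ z] d_smult[OF z] by simp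
  then have "c \<odot>\<^bsub>M\<^esub> (a \<odot>\<^bsub>M\<^esub> z) = z" using c a z by (simp add: M.add.inv_solve_right' M.minus_eq)
  then show "\<exists>c\<in>carrier R. c \<odot>\<^bsub>M\<^esub> (a \<odot>\<^bsub>M\<^esub> z) = z" using c by blast
qed

section \<open>Internal direct sums\<close>

lemma internal_direct_sum_summand:
  assumes "internal_direct_sum R M A n" and "j < n"
  shows "submodule (A j) R M" and "A j \<subseteq> carrier M" and "\<zero>\<^bsub>M\<^esub> \<in> A j"
proof -
  show A: "submodule (A j) R M" using assms unfolding internal_direct_sum_def by blast
  show "A j \<subseteq> carrier M" using submoduleE(1)[OF A] .
  show "\<zero>\<^bsub>M\<^esub> \<in> A j" using submodule_zero_closed[OF A] .
qed

lemma internal_direct_sum_family_carrier: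
  assumes "internal_direct_sum R M A n" and "\<forall>j<n. f j \<in> A j"
  shows "f \<in> {..<n} \<rightarrow> carrier M"
proof
  fix j assume "j \<in> {..<n}"
  then show "f j \<in> carrier M" using assms internal_direct_sum_summand(2)[OF assms(1)] by blast
qed

lemma internal_direct_sum_decompose:
  assumes "internal_direct_sum R M A n" and "x \<in> carrier M"
  obtains f where "\<forall>j<n. f j \<in> A j" and "x = finsum M f {..<n}"
proof -
  have "carrier M = {finsum M f {..<n} | f. \<forall>j<n. f j \<in> A j}"
    using assms(1) unfolding internal_direct_sum_def by (elim conjE)
  then show ?thesis using that assms(2) by blast
qed

lemma internal_direct_sum_unique:
  assumes "internal_direct_sum R M A n" and "\<forall>j<n. f j \<in> A j" and "\<forall>j<n. g j \<in> A j"
    and "finsum M f {..<n} = finsum M g {..<n}" and "j < n"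
  shows "f j = g j"
proof -
  have "\<forall>f g. (\<forall>j<n. f j \<in> A j) \<and> (\<forall>j<n. g j \<in> A j) \<and> finsum M f {..<n} = finsum M g {..<n}
          \<longrightarrow> (\<forall>j<n. f j = g j)"
    using assms(1) unfolding internal_direct_sum_def by (elim conjE)
  then show ?thesis using assms(2-5) by blast
qed

lemma internal_direct_sum_single:
  assumes ds: "internal_direct_sum R M A n" and "k < n" and "x \<in> A k"
  shows "\<forall>j<n. (if j = k then x else \<zero>\<^bsub>M\<^esub>) \<in> A j"
    and "finsum M (\<lambda>j. if j = k then x else \<zero>\<^bsub>M\<^esub>) {..<n} = x"
proof -
  show "\<forall>j<n. (if j = k then x else \<zero>\<^bsub>M\<^esub>) \<in> A j"
    using assms internal_direct_sum_summand(3)[OF ds] by auto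
  have "x \<in> carrier M" using assms internal_direct_sum_summand(2)[OF ds] by blast
  then show "finsum M (\<lambda>j. if j = k then x else \<zero>\<^bsub>M\<^esub>) {..<n} = x"
    using finsum_singleton[of k "{..<n}" "\<lambda>_. x"] \<open>k < n\<close> by (simp cong: if_cong add: eq_commute)
qed

lemma internal_direct_sum_decomposition_single:
  assumes ds: "internal_direct_sum R M A n" and "k < n" and "x \<in> A k"
    and "\<forall>j<n. f j \<in> A j" and "finsum M f {..<n} = x" and "j < n"
  shows "f j = (if j = k then x else \<zero>\<^bsub>M\<^esub>)"
proof -
  note single = internal_direct_sum_single[OF ds assms(2,3)]
  have "finsum M f {..<n} = finsum M (\<lambda>j. if j = k then x else \<zero>\<^bsub>M\<^esub>) {..<n}"
    using single(2) assms(5) by simp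
  then show ?thesis
    using internal_direct_sum_unique[OF ds assms(4) single(1) _ assms(6)] by simp
qed

lemma internal_direct_sum_inj_on:
  assumes ds: "internal_direct_sum R M A n"
    and e: "\<And>j. j < n \<Longrightarrow> e j \<in> A j" and e_nonzero: "\<And>j. j < n \<Longrightarrow> e j \<noteq> \<zero>\<^bsub>M\<^esub>"
  shows "inj_on e {..<n}"
proof (rule inj_onI, rule ccontr)
  fix j k assume "j \<in> {..<n}" "k \<in> {..<n}" and "e j = e k" and "j \<noteq> k"
  then have j: "j < n" and k: "k < n" by auto
  note single_j = internal_direct_sum_single[OF ds j e[OF j]]
  have "(if j = j then e j else \<zero>\<^bsub>M\<^esub>) = (if j = k then e k else \<zero>\<^bsub>M\<^esub>)"
    using internal_direct_sum_decomposition_single[OF ds k e[OF k] single_j(1) _ j]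
      single_j(2) \<open>e j = e k\<close> by simp
  then show False using e_nonzero[OF j] \<open>j \<noteq> k\<close> by simp
qed

lemma internal_direct_sum_generated_by_simple_summands:
  assumes ds: "internal_direct_sum R M A n" and simple: "\<forall>j<n. simple_submod R M (A j)"
    and e: "\<And>j. j < n \<Longrightarrow> e j \<in> A j" and e_nonzero: "\<And>j. j < n \<Longrightarrow> e j \<noteq> \<zero>\<^bsub>M\<^esub>"
  shows "generates R M (e ` {..<n}) (carrier M)"
proof -
  let ?E = "e ` {..<n}"
  have E_carrier: "?E \<subseteq> carrier M" using e internal_direct_sum_summand(2)[OF ds] by blast
  note E_submodule = gen_submod_submodule[OF E_carrier]
  have summand_in_span: "A j \<subseteq> gen_submod R M ?E" if "j < n" for j
  proof -
    have "submodule (A j \<inter> gen_submod R M ?E) R M"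
      using submodule_Int[OF internal_direct_sum_summand(1)[OF ds that] E_submodule] .
    moreover have "e j \<in> A j \<inter> gen_submod R M ?E"
      using e[OF that] gen_submod_subset[of ?E] that by blast
    ultimately have "A j \<inter> gen_submod R M ?E = A j"
      using simple e_nonzero[OF that] that unfolding simple_submod_def by blast
    then show ?thesis by blast
  qed
  have "carrier M \<subseteq> gen_submod R M ?E"
  proof
    fix x assume "x \<in> carrier M"
    then obtain f where "\<forall>j<n. f j \<in> A j" and "x = finsum M f {..<n}"
      using internal_direct_sum_decompose[OF ds] by blast
    then show "x \<in> gen_submod R M ?E"
      using submodule_finsum_closed[OF E_submodule] summand_in_span by blast
  qed
  then show ?thesis using E_carrier gen_submod_carrier[OF E_carrier] unfolding generates_def by blast
qed

lemma internal_direct_sum_vanishing_component_submodule: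
  assumes ds: "internal_direct_sum R M A n"
  shows "submodule {finsum M f {..<n} | f. (\<forall>j<n. f j \<in> A j) \<and> f k = \<zero>\<^bsub>M\<^esub>} R M"
    (is "submodule ?N R M")
proof (rule submoduleI_smult)
  show "?N \<subseteq> carrier M"
  proof
    fix x assume "x \<in> ?N"
    then obtain f where "\<forall>j<n. f j \<in> A j" and "x = finsum M f {..<n}" by blast
    then show "x \<in> carrier M"
      using finsum_closed[OF internal_direct_sum_family_carrier[OF ds]] by simp
  qed
  have "finsum M (\<lambda>_. \<zero>\<^bsub>M\<^esub>) {..<n} = \<zero>\<^bsub>M\<^esub>" by (rule finsum_zero)
  moreover have "\<forall>j<n. \<zero>\<^bsub>M\<^esub> \<in> A j" using internal_direct_sum_summand(3)[OF ds] by blast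
  ultimately show "\<zero>\<^bsub>M\<^esub> \<in> ?N" by (intro CollectI exI[of _ "\<lambda>_. \<zero>\<^bsub>M\<^esub>"]) simp
next
  fix x y assume "x \<in> ?N" "y \<in> ?N"
  then obtain f g where f: "\<forall>j<n. f j \<in> A j" "f k = \<zero>\<^bsub>M\<^esub>" "x = finsum M f {..<n}"
    and g: "\<forall>j<n. g j \<in> A j" "g k = \<zero>\<^bsub>M\<^esub>" "y = finsum M g {..<n}" by blast
  have "x \<oplus>\<^bsub>M\<^esub> y = finsum M (\<lambda>j. f j \<oplus>\<^bsub>M\<^esub> g j) {..<n}"
    using finsum_addf[OF internal_direct_sum_family_carrier[OF ds f(1)]
        internal_direct_sum_family_carrier[OF ds g(1)]] f(3) g(3)
    by simp
  moreover have "\<forall>j<n. f j \<oplus>\<^bsub>M\<^esub> g j \<in> A j"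
    using f(1) g(1) submoduleE(5)[OF internal_direct_sum_summand(1)[OF ds]] by blast
  moreover have "f k \<oplus>\<^bsub>M\<^esub> g k = \<zero>\<^bsub>M\<^esub>" using f(2) g(2) by simp
  ultimately show "x \<oplus>\<^bsub>M\<^esub> y \<in> ?N" by (intro CollectI exI[of _ "\<lambda>j. f j \<oplus>\<^bsub>M\<^esub> g j"]) simp
next
  fix a x assume a: "a \<in> carrier R" and "x \<in> ?N"
  then obtain f where f: "\<forall>j<n. f j \<in> A j" "f k = \<zero>\<^bsub>M\<^esub>" "x = finsum M f {..<n}" by blast
  have "a \<odot>\<^bsub>M\<^esub> x = finsum M (\<lambda>j. a \<odot>\<^bsub>M\<^esub> f j) {..<n}"
    using finsum_smult_ldistr[OF _ a internal_direct_sum_family_carrier[OF ds f(1)]] f(3) by simp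
  moreover have "\<forall>j<n. a \<odot>\<^bsub>M\<^esub> f j \<in> A j"
    using f(1) a submoduleE(4)[OF internal_direct_sum_summand(1)[OF ds]] by blast
  moreover have "a \<odot>\<^bsub>M\<^esub> f k = \<zero>\<^bsub>M\<^esub>" using f(2) a by simp
  ultimately show "a \<odot>\<^bsub>M\<^esub> x \<in> ?N" by (intro CollectI exI[of _ "\<lambda>j. a \<odot>\<^bsub>M\<^esub> f j"]) simp
qed

lemma internal_direct_sum_irredundant:
  assumes ds: "internal_direct_sum R M A n"
    and e: "\<And>j. j < n \<Longrightarrow> e j \<in> A j" and e_nonzero: "\<And>j. j < n \<Longrightarrow> e j \<noteq> \<zero>\<^bsub>M\<^esub>"
  shows "irredundant (e ` {..<n})"
  unfolding irredundant_def
proof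
  fix t assume "t \<in> e ` {..<n}"
  then obtain k where k: "k < n" and t: "t = e k" by blast
  define N where "N = {finsum M f {..<n} | f. (\<forall>j<n. f j \<in> A j) \<and> f k = \<zero>\<^bsub>M\<^esub>}"
  have "e j \<in> N" if "j < n" "j \<noteq> k" for j
  proof -
    note single = internal_direct_sum_single[OF ds that(1) e[OF that(1)]]
    have "(if k = j then e j else \<zero>\<^bsub>M\<^esub>) = \<zero>\<^bsub>M\<^esub>" using that(2) by simp
    then show ?thesis
      unfolding N_def using single by (intro CollectI exI[of _ "\<lambda>i. if i = j then e j else \<zero>\<^bsub>M\<^esub>"]) simp
  qed
  then have "e ` {..<n} - {t} \<subseteq> N" using t by blast
  then have "gen_submod R M (e ` {..<n} - {t}) \<subseteq> N"
    using gen_submod_least internal_direct_sum_vanishing_component_submodule[OF ds]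
    unfolding N_def by blast
  moreover have "t \<notin> N"
  proof
    assume "t \<in> N"
    then obtain f where f: "\<forall>j<n. f j \<in> A j" "f k = \<zero>\<^bsub>M\<^esub>" "finsum M f {..<n} = e k"
      unfolding N_def t by auto
    then have "f k = e k"
      using internal_direct_sum_decomposition_single[OF ds k e[OF k] f(1,3) k] by simp
    then show False using f(2) e_nonzero[OF k] by simp
  qed
  ultimately show "t \<notin> gen_submod R M (e ` {..<n} - {t})" by blast
qed

lemma internal_direct_sum_annihilator:
  assumes ds: "internal_direct_sum R M A n" and a: "a \<in> carrier R"
    and kills: "\<And>j x. j < n \<Longrightarrow> x \<in> A j \<Longrightarrow> a \<odot>\<^bsub>M\<^esub> x = \<zero>\<^bsub>M\<^esub>" and "z \<in> carrier M"
  shows "a \<odot>\<^bsub>M\<^esub> z = \<zero>\<^bsub>M\<^esub>"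
proof -
  obtain f where f: "\<forall>j<n. f j \<in> A j" and z: "z = finsum M f {..<n}"
    using internal_direct_sum_decompose[OF ds \<open>z \<in> carrier M\<close>] .
  have "a \<odot>\<^bsub>M\<^esub> z = finsum M (\<lambda>j. a \<odot>\<^bsub>M\<^esub> f j) {..<n}"
    using finsum_smult_ldistr[OF _ a internal_direct_sum_family_carrier[OF ds f]] z by simp
  also have "\<dots> = finsum M (\<lambda>j. \<zero>\<^bsub>M\<^esub>) {..<n}"
    using f kills by (intro finsum_cong) auto
  finally show ?thesis by simp
qed

lemma isotypic_semisimple_invertible_scalars:
  assumes ds: "internal_direct_sum R M A n" and simple: "\<forall>j<n. simple_submod R M (A j)"
    and iso: "\<forall>j<n. \<forall>k<n. submod_iso R M (A j) (A k)"
  shows invertible_scalars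
proof (cases "n = 0")
  case True
  have "z = \<zero>\<^bsub>M\<^esub>" if z: "z \<in> carrier M" for z
  proof -
    obtain f where "z = finsum M f {..<n}" using internal_direct_sum_decompose[OF ds z] by blast
    then show ?thesis using True by simp
  qed
  then show ?thesis unfolding invertible_scalars_def by (meson smult_closed)
next
  case False
  then have n: "0 < n" by simp
  note summand = internal_direct_sum_summand[OF ds]
  have simple_0: "simple_submod R M (A 0)" using simple n by blast
  then obtain v where v: "v \<in> A 0" "v \<noteq> \<zero>\<^bsub>M\<^esub>" by (rule simple_submod_ex_nonzero)
  show ?thesis
  proof (rule invertible_scalarsI[OF simple_0 v])
    fix a z assume a: "a \<in> carrier R" and av: "a \<odot>\<^bsub>M\<^esub> v = \<zero>\<^bsub>M\<^esub>" and "z \<in> carrier M"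
    have "\<forall>x\<in>A 0. a \<odot>\<^bsub>M\<^esub> x = \<zero>\<^bsub>M\<^esub>"
      using simple_submod_annihilator[OF simple_0 v a av] by blast
    then have "a \<odot>\<^bsub>M\<^esub> x = \<zero>\<^bsub>M\<^esub>" if "j < n" "x \<in> A j" for j x
      using submod_iso_annihilator[OF _ summand(1)[OF n] summand(1)[OF that(1)] a _ that(2)] iso n that(1)
      by blast
    then show "a \<odot>\<^bsub>M\<^esub> z = \<zero>\<^bsub>M\<^esub>"
      using internal_direct_sum_annihilator[OF ds a _ \<open>z \<in> carrier M\<close>] by blast
  qed
qed

end

theorem corollary2:
  fixes R :: "('a, 'c) ring_scheme" and M :: "('a, 'b, 'd) module_scheme"
    and A :: "nat \<Rightarrow> 'b set" and n r :: nat
  assumes "module R M"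
    and "internal_direct_sum R M A n"
    and "\<forall>j<n. simple_submod R M (A j)"
    and "\<forall>j<n. \<forall>k<n. submod_iso R M (A j) (A k)"
  shows "special_rank R M r \<longleftrightarrow> n = r"
proof -
  interpret module R M by fact
  have "\<exists>x. x \<in> A j \<and> x \<noteq> \<zero>\<^bsub>M\<^esub>" if "j < n" for j
    using simple_submod_ex_nonzero assms(3) that by metis
  then obtain e where e: "\<And>j. j < n \<Longrightarrow> e j \<in> A j" and e_nonzero: "\<And>j. j < n \<Longrightarrow> e j \<noteq> \<zero>\<^bsub>M\<^esub>"
    by metis
  have "card (e ` {..<n}) = n"
    using card_image[OF internal_direct_sum_inj_on[OF assms(2) e e_nonzero]] by simp
  moreover have "special_rank R M r \<longleftrightarrow> card (e ` {..<n}) = r"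
    by (rule special_rank_iff_card_irredundant_generating
        [OF isotypic_semisimple_invertible_scalars[OF assms(2-4)] finite_imageI[OF finite_lessThan]
          internal_direct_sum_generated_by_simple_summands[OF assms(2,3) e e_nonzero]
          internal_direct_sum_irredundant[OF assms(2) e e_nonzero]])
  ultimately show ?thesis by simp
qed

end
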